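(* Let $h:J\to\mathbb{R}$ be a non-negative function, where $J\subseteq\mathbb{R}$ is an interval with $[0,1]\subseteq J$, and assume $h$ is Lebesgue integrable on $[0,1]$. Let $I\subset[0,\infty)$ be an open interval, let $a,b\in I$ with $a<b$, and let $f:I\to\mathbb{R}$ be three times differentiable on $I$ with $f'''\in L_1[a,b]$. Let $q>1$. If $|f'''|^q$ is $h$-convex on $[a,b]$, then $$\left|\int_a^b f(x)\,dx-\frac{b-a}{6}\left[f(a)+4f\left(\frac{a+b}{2}\right)+f(b)\right]\right|\le \frac{(b-a)^4}{6}\left(\frac{1}{192}\right)^{1-\frac1q}\Bigl\{\bigl[K_1|f'''(a)|^q+K_2|f'''(b)|^q\bigr]^{1/q}+\bigl[K_2|f'''(a)|^q+K_1|f'''(b)|^q\bigr]^{1/q}\Bigr\},$$ where $K_1=\int_0^{1/2}t^2\left(\frac12-t\right)h(t)\,dt$ and $K_2=\int_0^{1/2}t^2\left(\frac12-t\right)h(1-t)\,dt$.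
   Context: Given a non-negative function $h$ defined on an interval containing $[0,1]$, a function $g:[a,b]\to\mathbb{R}$ is called $h$-convex on $[a,b]$ if $g$ is non-negative and for all $x,y\in[a,b]$ and $t\in[0,1]$, $$g(tx+(1-t)y)\le h(t)\,g(x)+h(1-t)\,g(y).$$ *)

theory Defs
  imports "HOL-Analysis.Analysis"
begin

definition h_convex_on :: "(real \<Rightarrow> real) \<Rightarrow> real \<Rightarrow> real \<Rightarrow> (real \<Rightarrow> real) \<Rightarrow> bool" where
  "h_convex_on h a b g \<longleftrightarrow>
     (\<forall>x\<in>{a..b}. 0 \<le> g x) \<and>
     (\<forall>x\<in>{a..b}. \<forall>y\<in>{a..b}. \<forall>t\<in>{0..1}.
        g (t * x + (1 - t) * y) \<le> h t * g x + h (1 - t) * g y)"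

end

theory Submission
  imports Defs
begin

(*
  The proof follows the classical three-step scheme.
  (1) Error representation: integrating by parts three times against the Simpson kernel
      K_{u,v}(x) = (x - u)^2 ((u + v)/2 - x) / 6, the Simpson error equals
      int_a^m K_{a,b} f''' + int_m^b K_{b,a} f''' with m = (a + b)/2.
  (2) A power-mean (Hoelder-type) inequality for a non-negative weight w:
      int w F <= (int w)^(1 - 1/q) (int w F^q)^(1/q), obtained from Young's inequality
      by optimising a free scaling parameter.
  (3) On each half the weight is the kernel, |f'''|^q is bounded through h-convexity by
      h((b-x)/(b-a)) |f'''(a)|^q + h((x-a)/(b-a)) |f'''(b)|^q, and the affine substitution
      x = a + t (b - a) turns the resulting kernel moments into (b-a)^4/6 times the
      constants 1/192, K_1, K_2.  The right half is reduced to the left half by the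
      reflection x -> a + b - x, which swaps the roles of f'''(a) and f'''(b).
  The theorem is the triangle inequality applied to the two half estimates.
*)

text \<open>The Simpson kernel \<open>K\<^sub>u\<^sub>,\<^sub>v\<close>: it vanishes to second order at \<open>u\<close>, vanishes at the midpoint of
  \<open>u\<close> and \<open>v\<close>, and has third derivative \<open>-1\<close>.\<close>
definition simpson_kernel :: "real \<Rightarrow> real \<Rightarrow> real \<Rightarrow> real" where
  "simpson_kernel u v x = (x - u)\<^sup>2 * ((u + v) / 2 - x) / 6"

lemma has_integral_reflect_Icc:
  fixes \<phi> :: "real \<Rightarrow> real"
  assumes "(\<phi> has_integral i) {u..v}"
  shows "((\<lambda>x. \<phi> (c - x)) has_integral i) {c - v..c - u}"
proof -
  have "((\<lambda>x. \<phi> (- x)) has_integral i) {-v..-u}"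
    using assms by (subst has_integral_reflect_real)
  from has_integral_affinity'[OF this[unfolded cbox_interval[symmetric]], of 1 "- c"]
  show ?thesis by (simp add: cbox_interval)
qed

lemma absolutely_integrable_reflect_Icc:
  fixes \<phi> :: "real \<Rightarrow> real"
  assumes "\<phi> absolutely_integrable_on {u..v}"
  shows "(\<lambda>x. \<phi> (c - x)) absolutely_integrable_on {c - v..c - u}"
  using assms unfolding absolutely_integrable_on_def integrable_on_def
  by (blast dest: has_integral_reflect_Icc[where c = c])

lemma has_integral_rescale:
  fixes \<phi> :: "real \<Rightarrow> real"
  assumes "(\<phi> has_integral K) {u..v}" and d: "d > 0"
  shows "((\<lambda>x. \<phi> ((x - a) / d)) has_integral d * K) {a + u * d..a + v * d}"
proof -
  have "((\<lambda>x. \<phi> ((1 / d) *\<^sub>R x + - a / d)) has_integral K /\<^sub>R (1 / d) ^ DIM(real))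
      (cbox ((u - - a / d) /\<^sub>R (1 / d)) ((v - - a / d) /\<^sub>R (1 / d)))"
    using d by (intro has_integral_affinity'[OF assms(1)[unfolded cbox_interval[symmetric]]]) simp
  moreover have "(\<lambda>x. \<phi> ((1 / d) *\<^sub>R x + - a / d)) = (\<lambda>x. \<phi> ((x - a) / d))"
    by (simp add: diff_divide_distrib)
  moreover have "K /\<^sub>R (1 / d) ^ DIM(real) = d * K"
    and "(u - - a / d) /\<^sub>R (1 / d) = a + u * d" and "(v - - a / d) /\<^sub>R (1 / d) = a + v * d"
    using d by (simp_all add: field_simps)
  ultimately show ?thesis by (simp add: cbox_interval)
qed

lemma absolutely_integrable_continuous_mult:
  fixes p \<psi> :: "real \<Rightarrow> real"
  assumes "continuous_on {u..v} p" "\<psi> absolutely_integrable_on {u..v}"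
  shows "(\<lambda>x. p x * \<psi> x) absolutely_integrable_on {u..v}"
proof (rule absolutely_integrable_bounded_measurable_product_real)
  show "p \<in> borel_measurable (lebesgue_on {u..v})"
    by (rule continuous_imp_measurable_on_sets_lebesgue[OF assms(1)]) simp
  show "bounded (p ` {u..v})"
    by (rule compact_imp_bounded[OF compact_continuous_image[OF assms(1) compact_Icc]])
qed (use assms in auto)

lemma h_moments_integrable:
  fixes h :: "real \<Rightarrow> real"
  assumes "h absolutely_integrable_on {0..1}"
  shows "(\<lambda>t. t\<^sup>2 * (1/2 - t) * h t) integrable_on {0..1/2}"
    and "(\<lambda>t. t\<^sup>2 * (1/2 - t) * h (1 - t)) integrable_on {0..1/2}"
proof -
  have half: "{0..1/2} \<subseteq> {0..(1::real)}" by auto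
  have cont: "continuous_on {0..1/2} (\<lambda>t::real. t\<^sup>2 * (1/2 - t))"
    by (intro continuous_intros)
  have "(\<lambda>t. h (1 - t)) absolutely_integrable_on {1 - 1..1 - 0}"
    using assms by (rule absolutely_integrable_reflect_Icc)
  then have "(\<lambda>t. h (1 - t)) absolutely_integrable_on {0..1}" by simp
  then show "(\<lambda>t. t\<^sup>2 * (1/2 - t) * h (1 - t)) integrable_on {0..1/2}"
    and "(\<lambda>t. t\<^sup>2 * (1/2 - t) * h t) integrable_on {0..1/2}"
    using absolutely_integrable_continuous_mult[OF cont absolutely_integrable_on_subinterval]
      assms half by (auto simp: absolutely_integrable_on_def)
qed

lemma integration_by_parts_thrice:
  fixes f f1 f2 f3 k k1 k2 :: "real \<Rightarrow> real"
  assumes sub: "{u..v} \<subseteq> I" and uv: "u \<le> v"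
    and d1: "\<forall>x\<in>I. (f has_real_derivative f1 x) (at x)"
    and d2: "\<forall>x\<in>I. (f1 has_real_derivative f2 x) (at x)"
    and d3: "\<forall>x\<in>I. (f2 has_real_derivative f3 x) (at x)"
    and k0: "\<And>x. (k has_real_derivative k1 x) (at x)"
    and k1: "\<And>x. (k1 has_real_derivative k2 x) (at x)"
    and k2: "\<And>x. (k2 has_real_derivative -1) (at x)"
  shows "((\<lambda>x. k x * f3 x) has_integral
     (k v * f2 v - k1 v * f1 v + k2 v * f v) - (k u * f2 u - k1 u * f1 u + k2 u * f u)
       + integral {u..v} f) {u..v}"
proof -
  define G where "G x = k x * f2 x - k1 x * f1 x + k2 x * f x" for x
  have dG: "(G has_real_derivative k x * f3 x - f x) (at x)" if x: "x \<in> I" for x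
  proof -
    have "(G has_real_derivative (k x * f3 x + k1 x * f2 x) - (k1 x * f2 x + k2 x * f1 x)
        + (k2 x * f1 x + -1 * f x)) (at x)"
      unfolding G_def
      by (intro DERIV_add DERIV_diff DERIV_mult'[OF k0 d3[rule_format, OF x]]
        DERIV_mult'[OF k1 d2[rule_format, OF x]] DERIV_mult'[OF k2 d1[rule_format, OF x]])
    then show ?thesis by (simp add: algebra_simps)
  qed
  have "((\<lambda>x. k x * f3 x - f x) has_integral G v - G u) {u..v}"
  proof (rule fundamental_theorem_of_calculus[OF uv])
    fix x assume "x \<in> {u..v}"
    with dG sub show "(G has_vector_derivative k x * f3 x - f x) (at x within {u..v})"
      by (auto simp: has_real_derivative_iff_has_vector_derivative[symmetric]
          has_field_derivative_at_within)
  qed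
  moreover have "continuous_on {u..v} f"
    using d1 sub by (intro continuous_at_imp_continuous_on) (auto dest: DERIV_isCont)
  then have "(f has_integral integral {u..v} f) {u..v}"
    by (intro integrable_integral integrable_continuous_real)
  ultimately have "((\<lambda>x. (k x * f3 x - f x) + f x) has_integral G v - G u + integral {u..v} f) {u..v}"
    by (rule has_integral_add)
  then show ?thesis by (simp add: G_def)
qed

lemma simpson_kernel_derivatives:
  "(simpson_kernel u v has_real_derivative (2 * (x - u) * ((u + v) / 2 - x) - (x - u)\<^sup>2) / 6) (at x)"
  "((\<lambda>x. (2 * (x - u) * ((u + v) / 2 - x) - (x - u)\<^sup>2) / 6)
     has_real_derivative (2 * ((u + v) / 2 - x) - 4 * (x - u)) / 6) (at x)"
  "((\<lambda>x. (2 * ((u + v) / 2 - x) - 4 * (x - u)) / 6) has_real_derivative -1) (at x)"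
  unfolding simpson_kernel_def
  by (auto intro!: derivative_eq_intros simp: field_simps power2_eq_square)

lemma simpson_error_representation:
  fixes f f1 f2 f3 :: "real \<Rightarrow> real"
  assumes sub: "{a..b} \<subseteq> I" and ab: "a \<le> b"
    and d1: "\<forall>x\<in>I. (f has_real_derivative f1 x) (at x)"
    and d2: "\<forall>x\<in>I. (f1 has_real_derivative f2 x) (at x)"
    and d3: "\<forall>x\<in>I. (f2 has_real_derivative f3 x) (at x)"
  shows "integral {a..b} f - (b - a) / 6 * (f a + 4 * f ((a + b) / 2) + f b)
       = integral {a..(a + b) / 2} (\<lambda>x. simpson_kernel a b x * f3 x)
       + integral {(a + b) / 2..b} (\<lambda>x. simpson_kernel b a x * f3 x)"
proof -
  define m where "m = (a + b) / 2"
  have am: "a \<le> m" "m \<le> b" using ab by (auto simp: m_def)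
  have sub_halves: "{a..m} \<subseteq> I" "{m..b} \<subseteq> I" using sub am by auto
  have left: "integral {a..m} (\<lambda>x. simpson_kernel a b x * f3 x)
      = (b - a)\<^sup>2 / 24 * f1 m - (b - a) / 3 * f m - (b - a) / 6 * f a + integral {a..m} f"
    using integral_unique[OF integration_by_parts_thrice[OF sub_halves(1) am(1) d1 d2 d3
        simpson_kernel_derivatives[of a b]]]
    by (simp add: simpson_kernel_def m_def field_simps power2_eq_square)
  have right: "integral {m..b} (\<lambda>x. simpson_kernel b a x * f3 x)
      = - (b - a) / 6 * f b - (b - a)\<^sup>2 / 24 * f1 m - (b - a) / 3 * f m + integral {m..b} f"
    using integral_unique[OF integration_by_parts_thrice[OF sub_halves(2) am(2) d1 d2 d3
        simpson_kernel_derivatives[of b a]]]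
    by (simp add: simpson_kernel_def m_def field_simps power2_eq_square)
  have "continuous_on {a..b} f"
    using d1 sub by (intro continuous_at_imp_continuous_on) (auto dest: DERIV_isCont)
  then have "integral {a..b} f = integral {a..m} f + integral {m..b} f"
    using am by (intro Henstock_Kurzweil_Integration.integral_combine[symmetric] integrable_continuous_real) auto
  with left right show ?thesis
    by (simp add: m_def field_simps)
qed

lemma young_scaled:
  fixes q l y :: real
  assumes q: "q > 1" and l: "l > 0" and y: "y \<ge> 0"
  shows "y \<le> l * (1 - 1/q) + l powr (1 - q) * y powr q / q"
proof -
  define p where "p = q / (q - 1)"
  have p: "p > 1" "1/p + 1/q = 1" using q by (auto simp: p_def field_simps)
  have young: "l powr (1/p) * (y * l powr (-1/p))
      \<le> (l powr (1/p)) powr p / p + (y * l powr (-1/p)) powr q / q"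
    by (rule Youngs_inequality) (use p q y in auto)
  have "l powr (1/p) * l powr (-1/p) = 1"
    using l by (simp flip: powr_add)
  then have lhs: "l powr (1/p) * (y * l powr (-1/p)) = y" by (simp add: algebra_simps)
  have first: "(l powr (1/p)) powr p / p = l * (1 - 1/q)"
    using p l q by (simp add: powr_powr p_def field_simps)
  have "-1/p * q = 1 - q" using q by (simp add: p_def field_simps)
  then have second: "(y * l powr (-1/p)) powr q = y powr q * l powr (1 - q)"
    using y l by (simp add: powr_mult powr_powr)
  from young show ?thesis unfolding lhs first second by (simp add: mult.commute)
qed

text \<open>If \<open>X \<le> (1 - 1/q) l A + l powr (1 - q) C / q\<close> for all \<open>l > 0\<close>,
  then \<open>X \<le> A powr (1 - 1/q) C powr (1/q)\<close>; the minimum is attained at \<open>l = (C/A) powr (1/q)\<close>,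
  and the case \<open>C = 0\<close> is handled by letting \<open>l\<close> tend to zero.\<close>
lemma le_from_scaled_bounds:
  fixes X A C q :: real
  assumes q: "q > 1" and A: "A > 0" and C: "C \<ge> 0"
    and bound: "\<And>l. l > 0 \<Longrightarrow> X \<le> l * (1 - 1/q) * A + l powr (1 - q) * C / q"
  shows "X \<le> A powr (1 - 1/q) * C powr (1/q)"
proof (cases "C = 0")
  case True
  show ?thesis
  proof (rule ccontr)
    assume "\<not> ?thesis"
    then have X: "X > 0" using True q by simp
    define d where "d = 1 - 1/q"
    have d: "d > 0" using q by (simp add: d_def)
    have "X \<le> X / (2 * d * A) * d * A"
      using bound[of "X / (2 * d * A)"] X A d True by (simp add: d_def)
    also have "\<dots> = X / 2" using A d by (simp add: field_simps)
    finally show False using X by simp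
  qed
next
  case False
  then have C: "C > 0" using C by simp
  define l where "l = (C / A) powr (1/q)"
  have l: "l > 0" using C A by (simp add: l_def)
  have lA: "l * A = A powr (1 - 1/q) * C powr (1/q)"
  proof -
    have "A = A powr (1/q) * A powr (1 - 1/q)"
      using A by (simp flip: powr_add)
    then show ?thesis
      using A C q by (simp add: l_def powr_divide field_simps)
  qed
  have lC: "l powr (1 - q) * C = A powr (1 - 1/q) * C powr (1/q)"
  proof -
    have "l powr (1 - q) = (C / A) powr (1/q - 1)"
      using C A q by (simp add: l_def powr_powr diff_divide_distrib)
    then have "l powr (1 - q) * C = C powr (1/q - 1) * C * A powr (1 - 1/q)"
      using A C by (simp add: powr_divide powr_diff powr_minus field_simps)
    also have "C powr (1/q - 1) * C = C powr (1/q)"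
      using C by (simp add: powr_diff)
    finally show ?thesis by simp
  qed
  have "X \<le> (1 - 1/q) * (l * A) + (l powr (1 - q) * C) / q"
    using bound[OF l] by (simp add: algebra_simps)
  also have "\<dots> = A powr (1 - 1/q) * C powr (1/q)"
    unfolding lA lC using q by (simp add: field_simps)
  finally show ?thesis .
qed

text \<open>Step (2): the power-mean inequality
  \<open>integral w F \<le> (integral w) powr (1 - 1/q) * (integral w H) powr (1/q)\<close>
  for a non-negative weight \<open>w\<close> and \<open>0 \<le> F\<close> with \<open>F powr q \<le> H\<close>, obtained by integrating
  the scaled Young inequality against \<open>w\<close>.\<close>
lemma weighted_power_mean_inequality:
  fixes w F H :: "real \<Rightarrow> real" and S :: "real set" and q A C :: real
  assumes q: "q > 1" and iF: "(\<lambda>x. w x * F x) integrable_on S"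
    and iw: "(w has_integral A) S" and A: "A > 0"
    and iH: "((\<lambda>x. w x * H x) has_integral C) S"
    and w0: "\<And>x. x \<in> S \<Longrightarrow> 0 \<le> w x"
    and F0: "\<And>x. x \<in> S \<Longrightarrow> 0 \<le> F x"
    and FH: "\<And>x. x \<in> S \<Longrightarrow> F x powr q \<le> H x"
  shows "integral S (\<lambda>x. w x * F x) \<le> A powr (1 - 1/q) * C powr (1/q)"
proof (rule le_from_scaled_bounds[OF q A])
  show "C \<ge> 0"
  proof (rule has_integral_nonneg[OF iH])
    fix x assume x: "x \<in> S"
    have "0 \<le> H x" using FH[OF x] powr_ge_zero[of "F x" q] by linarith
    then show "0 \<le> w x * H x" using w0[OF x] by simp
  qed
  fix l :: real assume l: "l > 0"
  define B where "B x = l * (1 - 1/q) * w x + l powr (1 - q) / q * (w x * H x)" for x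
  have iB: "(B has_integral l * (1 - 1/q) * A + l powr (1 - q) / q * C) S"
    unfolding B_def by (intro has_integral_add has_integral_mult_right iw iH)
  have "integral S (\<lambda>x. w x * F x) \<le> integral S B"
  proof (rule integral_le[OF iF has_integral_integrable[OF iB]])
    fix x assume x: "x \<in> S"
    have "F x \<le> l * (1 - 1/q) + l powr (1 - q) * F x powr q / q"
      by (rule young_scaled[OF q l F0[OF x]])
    also have "\<dots> \<le> l * (1 - 1/q) + l powr (1 - q) * H x / q"
      using FH[OF x] q by (simp add: divide_right_mono mult_left_mono)
    finally have "w x * F x \<le> w x * (l * (1 - 1/q) + l powr (1 - q) * H x / q)"
      using w0[OF x] by (rule mult_left_mono)
    then show "w x * F x \<le> B x" by (simp add: B_def algebra_simps)
  qed
  also have "\<dots> = l * (1 - 1/q) * A + l powr (1 - q) / q * C"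
    using iB by (rule integral_unique)
  finally show "integral S (\<lambda>x. w x * F x) \<le> l * (1 - 1/q) * A + l powr (1 - q) * C / q"
    by simp
qed

lemma weighted_power_mean_abs_bound:
  fixes w F H :: "real \<Rightarrow> real" and S :: "real set" and q A C :: real
  assumes q: "q > 1" and iF: "(\<lambda>x. w x * F x) absolutely_integrable_on S"
    and iw: "(w has_integral A) S" and A: "A > 0"
    and iH: "((\<lambda>x. w x * H x) has_integral C) S"
    and w0: "\<And>x. x \<in> S \<Longrightarrow> 0 \<le> w x"
    and FH: "\<And>x. x \<in> S \<Longrightarrow> \<bar>F x\<bar> powr q \<le> H x"
  shows "\<bar>integral S (\<lambda>x. w x * F x)\<bar> \<le> A powr (1 - 1/q) * C powr (1/q)"
proof -
  have iabs: "(\<lambda>x. w x * \<bar>F x\<bar>) integrable_on S"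
    using iF w0 unfolding absolutely_integrable_on_def
    by (auto intro: integrable_eq simp: abs_mult)
  have "\<bar>integral S (\<lambda>x. w x * F x)\<bar> \<le> integral S (\<lambda>x. w x * \<bar>F x\<bar>)"
    unfolding real_norm_def[symmetric]
    using iF iabs w0 by (intro integral_norm_bound_integral)
      (auto simp: absolutely_integrable_on_def abs_mult)
  also have "\<dots> \<le> A powr (1 - 1/q) * C powr (1/q)"
    using weighted_power_mean_inequality[OF q iabs iw A iH w0 _ FH] by simp
  finally show ?thesis .
qed

lemma h_convex_endpoint_bound:
  assumes "h_convex_on h a b g" and "a < b" and x: "x \<in> {a..b}"
  shows "g x \<le> h ((b - x) / (b - a)) * g a + h ((x - a) / (b - a)) * g b"
proof -
  define t where "t = (b - x) / (b - a)"
  have t: "t \<in> {0..1}" using x \<open>a < b\<close> by (auto simp: t_def field_simps)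
  have "t * (b - a) = b - x" and one_minus_t: "1 - t = (x - a) / (b - a)"
    using \<open>a < b\<close> by (simp_all add: t_def field_simps)
  then have point: "t * a + (1 - t) * b = x" by (simp add: algebra_simps)
  have "g (t * a + (1 - t) * b) \<le> h t * g a + h (1 - t) * g b"
    using assms(1) t \<open>a < b\<close> unfolding h_convex_on_def by auto
  then have "g x \<le> h t * g a + h (1 - t) * g b" by (simp only: point)
  then show ?thesis using one_minus_t by (simp add: t_def)
qed

lemma simpson_unit_kernel_mass: "((\<lambda>t::real. t\<^sup>2 * (1/2 - t)) has_integral 1/192) {0..1/2}"
proof -
  have "((\<lambda>t::real. t\<^sup>2 * (1/2 - t)) has_integral
      ((\<lambda>t. t^3/6 - t^4/4) (1/2) - (\<lambda>t. t^3/6 - t^4/4) 0)) {0..1/2}"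
  proof (rule fundamental_theorem_of_calculus)
    fix x :: real
    have "((\<lambda>t::real. t^3/6 - t^4/4) has_real_derivative x\<^sup>2 * (1/2 - x)) (at x within {0..1/2})"
      by (auto intro!: derivative_eq_intros simp: power2_eq_square power3_eq_cube algebra_simps)
    then show "((\<lambda>t::real. t^3/6 - t^4/4) has_vector_derivative x\<^sup>2 * (1/2 - x)) (at x within {0..1/2})"
      by (simp add: has_real_derivative_iff_has_vector_derivative)
  qed simp
  then show ?thesis by (simp add: power_divide)
qed

lemma simpson_kernel_moment:
  fixes \<psi> :: "real \<Rightarrow> real"
  assumes "((\<lambda>t. t\<^sup>2 * (1/2 - t) * \<psi> t) has_integral K) {0..1/2}" and ab: "a < b"
  shows "((\<lambda>x. simpson_kernel a b x * \<psi> ((x - a) / (b - a))) has_integral (b - a) ^ 4 / 6 * K)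
      {a..(a + b) / 2}"
proof -
  have "((\<lambda>t. (b - a) ^ 3 / 6 * (t\<^sup>2 * (1/2 - t) * \<psi> t)) has_integral (b - a) ^ 3 / 6 * K) {0..1/2}"
    using assms(1) by (rule has_integral_mult_right)
  then have rescaled: "((\<lambda>x. (b - a) ^ 3 / 6 * (((x - a) / (b - a))\<^sup>2 * (1/2 - (x - a) / (b - a))
      * \<psi> ((x - a) / (b - a)))) has_integral (b - a) * ((b - a) ^ 3 / 6 * K))
      {a + 0 * (b - a)..a + 1/2 * (b - a)}"
    using ab by (intro has_integral_rescale) auto
  have kernel: "(b - a) ^ 3 / 6 * (((x - a) / (b - a))\<^sup>2 * (1/2 - (x - a) / (b - a))
      * \<psi> ((x - a) / (b - a))) = simpson_kernel a b x * \<psi> ((x - a) / (b - a))" for x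
  proof -
    have "d ^ 3 / 6 * ((u / d)\<^sup>2 * (1/2 - u / d)) = u\<^sup>2 * (d / 2 - u) / 6" if "d \<noteq> 0" for u d :: real
      using that by (simp add: field_simps power2_eq_square power3_eq_cube)
    moreover have "(b - a) / 2 - (x - a) = (a + b) / 2 - x" by (simp add: field_simps)
    ultimately have "(b - a) ^ 3 / 6 * (((x - a) / (b - a))\<^sup>2 * (1/2 - (x - a) / (b - a)))
        = simpson_kernel a b x"
      using ab by (simp add: simpson_kernel_def)
    then show ?thesis by (metis mult.assoc)
  qed
  have total: "(b - a) * ((b - a) ^ 3 / 6 * K) = (b - a) ^ 4 / 6 * K"
    by (simp add: eval_nat_numeral)
  have ends: "a + 0 * (b - a) = a" "a + 1/2 * (b - a) = (a + b) / 2"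
    by (simp_all add: field_simps)
  show ?thesis using rescaled unfolding kernel total ends .
qed

lemma simpson_kernel_mass:
  assumes "a < b"
  shows "(simpson_kernel a b has_integral (b - a) ^ 4 / 6 * (1/192)) {a..(a + b) / 2}"
proof -
  have "((\<lambda>t::real. t\<^sup>2 * (1/2 - t) * 1) has_integral 1/192) {0..1/2}"
    using simpson_unit_kernel_mass by simp
  from simpson_kernel_moment[OF this assms] show ?thesis by simp
qed

text \<open>The kernel moment of the h-convexity majorant of the third derivative; this is where
  the constants \<open>K\<^sub>1\<close> and \<open>K\<^sub>2\<close> arise.\<close>
lemma simpson_kernel_h_moment:
  fixes h :: "real \<Rightarrow> real"
  assumes K1: "((\<lambda>t. t\<^sup>2 * (1/2 - t) * h t) has_integral K1) {0..1/2}"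
    and K2: "((\<lambda>t. t\<^sup>2 * (1/2 - t) * h (1 - t)) has_integral K2) {0..1/2}"
    and ab: "a < b"
  shows "((\<lambda>x. simpson_kernel a b x * (h ((b - x) / (b - a)) * A + h ((x - a) / (b - a)) * B))
      has_integral (b - a) ^ 4 / 6 * (K2 * A + K1 * B)) {a..(a + b) / 2}"
proof -
  have "((\<lambda>t. t\<^sup>2 * (1/2 - t) * h (1 - t) * A + t\<^sup>2 * (1/2 - t) * h t * B)
      has_integral K2 * A + K1 * B) {0..1/2}"
    by (intro has_integral_add has_integral_mult_left K1 K2)
  then have "((\<lambda>t. t\<^sup>2 * (1/2 - t) * (h (1 - t) * A + h t * B)) has_integral K2 * A + K1 * B) {0..1/2}"
    by (rule has_integral_eq[rotated]) (simp add: algebra_simps)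
  from simpson_kernel_moment[OF this ab]
  have "((\<lambda>x. simpson_kernel a b x * (h (1 - (x - a) / (b - a)) * A + h ((x - a) / (b - a)) * B))
      has_integral (b - a) ^ 4 / 6 * (K2 * A + K1 * B)) {a..(a + b) / 2}" .
  moreover have "1 - (x - a) / (b - a) = (b - x) / (b - a)" for x
    using ab by (simp add: field_simps)
  ultimately show ?thesis by simp
qed

lemma powr_conjugate_factor:
  fixes D c Q q :: real
  assumes "D > 0" "c > 0" "Q \<ge> 0"
  shows "(D * c) powr (1 - 1/q) * (D * Q) powr (1/q) = D * (c powr (1 - 1/q) * Q powr (1/q))"
proof -
  have "D powr (1 - 1/q) * D powr (1/q) = D"
    using assms by (simp flip: powr_add)
  then show ?thesis
    using assms by (simp add: powr_mult mult_ac)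
qed

lemma simpson_left_half_bound:
  fixes h F :: "real \<Rightarrow> real"
  assumes q: "q > 1" and ab: "a < b"
    and F_int: "F absolutely_integrable_on {a..(a + b) / 2}"
    and K1: "((\<lambda>t. t\<^sup>2 * (1/2 - t) * h t) has_integral K1) {0..1/2}"
    and K2: "((\<lambda>t. t\<^sup>2 * (1/2 - t) * h (1 - t)) has_integral K2) {0..1/2}"
    and F_bound: "\<And>x. x \<in> {a..(a + b) / 2} \<Longrightarrow>
        \<bar>F x\<bar> powr q \<le> h ((b - x) / (b - a)) * A + h ((x - a) / (b - a)) * B"
  shows "\<bar>integral {a..(a + b) / 2} (\<lambda>x. simpson_kernel a b x * F x)\<bar>
      \<le> (b - a) ^ 4 / 6 * ((1/192) powr (1 - 1/q) * (K2 * A + K1 * B) powr (1/q))"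
proof -
  define D where "D = (b - a) ^ 4 / 6"
  define H where "H x = h ((b - x) / (b - a)) * A + h ((x - a) / (b - a)) * B" for x
  have D: "D > 0" using ab by (simp add: D_def)
  note mass = simpson_kernel_mass[OF ab, folded D_def]
  have moment: "((\<lambda>x. simpson_kernel a b x * H x) has_integral D * (K2 * A + K1 * B)) {a..(a + b) / 2}"
    unfolding D_def H_def by (rule simpson_kernel_h_moment[OF K1 K2 ab])
  have kernel_nonneg: "0 \<le> simpson_kernel a b x" if "x \<in> {a..(a + b) / 2}" for x
    using that by (simp add: simpson_kernel_def)
  have FH: "\<bar>F x\<bar> powr q \<le> H x" if "x \<in> {a..(a + b) / 2}" for x
    using F_bound[OF that] by (simp add: H_def)
  have "(\<lambda>x. simpson_kernel a b x * F x) absolutely_integrable_on {a..(a + b) / 2}"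
    by (rule absolutely_integrable_continuous_mult[OF _ F_int])
      (auto simp: simpson_kernel_def intro!: continuous_intros)
  then have bound: "\<bar>integral {a..(a + b) / 2} (\<lambda>x. simpson_kernel a b x * F x)\<bar>
      \<le> (D * (1/192)) powr (1 - 1/q) * (D * (K2 * A + K1 * B)) powr (1/q)"
    by (rule weighted_power_mean_abs_bound[OF q _ mass _ moment kernel_nonneg FH]) (use D in simp)
  have "D * (K2 * A + K1 * B) \<ge> 0"
  proof (rule has_integral_nonneg[OF moment])
    fix x assume x: "x \<in> {a..(a + b) / 2}"
    have "0 \<le> H x" using FH[OF x] powr_ge_zero[of "\<bar>F x\<bar>" q] by linarith
    then show "0 \<le> simpson_kernel a b x * H x" using kernel_nonneg[OF x] by simp
  qed
  then have "K2 * A + K1 * B \<ge> 0" using D by (simp add: zero_le_mult_iff)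
  then have "(D * (1/192)) powr (1 - 1/q) * (D * (K2 * A + K1 * B)) powr (1/q)
      = D * ((1/192) powr (1 - 1/q) * (K2 * A + K1 * B) powr (1/q))"
    using D by (intro powr_conjugate_factor) auto
  with bound show ?thesis unfolding D_def by simp
qed

lemma simpson_right_half_reflected:
  fixes F :: "real \<Rightarrow> real"
  assumes "F absolutely_integrable_on {(a + b) / 2..b}"
  shows "integral {(a + b) / 2..b} (\<lambda>x. simpson_kernel b a x * F x)
       = - integral {a..(a + b) / 2} (\<lambda>y. simpson_kernel a b y * F (a + b - y))"
proof -
  have "continuous_on {(a + b) / 2..b} (\<lambda>x. simpson_kernel b a x)"
    unfolding simpson_kernel_def by (intro continuous_intros) auto
  from absolutely_integrable_continuous_mult[OF this assms]
  have "(\<lambda>x. simpson_kernel b a x * F x) integrable_on {(a + b) / 2..b}"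
    unfolding absolutely_integrable_on_def by (rule conjunct1)
  from has_integral_reflect_Icc[OF integrable_integral[OF this], of "a + b"]
  have "((\<lambda>y. simpson_kernel b a (a + b - y) * F (a + b - y)) has_integral
      integral {(a + b) / 2..b} (\<lambda>x. simpson_kernel b a x * F x)) {a + b - b..a + b - (a + b) / 2}"
    .
  moreover have "a + b - b = a" and "a + b - (a + b) / 2 = (a + b) / 2" by (simp_all add: field_simps)
  moreover have "simpson_kernel b a (a + b - y) = - simpson_kernel a b y" for y
    unfolding simpson_kernel_def by (simp add: field_simps power2_eq_square)
  ultimately have "((\<lambda>y. - (simpson_kernel a b y * F (a + b - y))) has_integral
      integral {(a + b) / 2..b} (\<lambda>x. simpson_kernel b a x * F x)) {a..(a + b) / 2}"
    by (simp only: mult_minus_left)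
  from integral_unique[OF this] show ?thesis
    by (simp add: integral_neg)
qed

text \<open>Step (3), right half \<open>[(a+b)/2, b]\<close>: reflection reduces it to the left half with the
  endpoint values \<open>A\<close> and \<open>B\<close> interchanged.\<close>
lemma simpson_right_half_bound:
  fixes h F :: "real \<Rightarrow> real"
  assumes q: "q > 1" and ab: "a < b"
    and F_int: "F absolutely_integrable_on {(a + b) / 2..b}"
    and K1: "((\<lambda>t. t\<^sup>2 * (1/2 - t) * h t) has_integral K1) {0..1/2}"
    and K2: "((\<lambda>t. t\<^sup>2 * (1/2 - t) * h (1 - t)) has_integral K2) {0..1/2}"
    and F_bound: "\<And>x. x \<in> {(a + b) / 2..b} \<Longrightarrow>
        \<bar>F x\<bar> powr q \<le> h ((b - x) / (b - a)) * A + h ((x - a) / (b - a)) * B"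
  shows "\<bar>integral {(a + b) / 2..b} (\<lambda>x. simpson_kernel b a x * F x)\<bar>
      \<le> (b - a) ^ 4 / 6 * ((1/192) powr (1 - 1/q) * (K1 * A + K2 * B) powr (1/q))"
proof -
  have "(\<lambda>y. F (a + b - y)) absolutely_integrable_on {a + b - b..a + b - (a + b) / 2}"
    by (rule absolutely_integrable_reflect_Icc[OF F_int])
  moreover have "a + b - b = a" and "a + b - (a + b) / 2 = (a + b) / 2" by (simp_all add: field_simps)
  ultimately have reflected_int: "(\<lambda>y. F (a + b - y)) absolutely_integrable_on {a..(a + b) / 2}"
    by (simp only:)
  have "\<bar>integral {a..(a + b) / 2} (\<lambda>y. simpson_kernel a b y * F (a + b - y))\<bar>
      \<le> (b - a) ^ 4 / 6 * ((1/192) powr (1 - 1/q) * (K2 * B + K1 * A) powr (1/q))"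
  proof (rule simpson_left_half_bound[OF q ab reflected_int K1 K2])
    fix y assume "y \<in> {a..(a + b) / 2}"
    then have "a + b - y \<in> {(a + b) / 2..b}" and "b - (a + b - y) = y - a" and "a + b - y - a = b - y"
      by (auto simp: field_simps)
    with F_bound[of "a + b - y"]
    show "\<bar>F (a + b - y)\<bar> powr q \<le> h ((b - y) / (b - a)) * B + h ((y - a) / (b - a)) * A"
      by simp
  qed
  then show ?thesis
    unfolding simpson_right_half_reflected[OF F_int] abs_minus_cancel add.commute[of "K2 * B"] .
qed

theorem theorem3:
  fixes h f f1 f2 f3 :: "real \<Rightarrow> real"
    and J I :: "real set"
    and a b q :: real
  assumes J_int: "is_interval J" and J_sub: "{0..1} \<subseteq> J"
    and h_nonneg: "\<forall>t\<in>J. 0 \<le> h t"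
    and h_int: "h absolutely_integrable_on {0..1}"
    and I_open: "open I" and I_int: "is_interval I" and I_sub: "I \<subseteq> {0..}"
    and a_in: "a \<in> I" and b_in: "b \<in> I" and ab: "a < b"
    and d1: "\<forall>x\<in>I. (f has_real_derivative f1 x) (at x)"
    and d2: "\<forall>x\<in>I. (f1 has_real_derivative f2 x) (at x)"
    and d3: "\<forall>x\<in>I. (f2 has_real_derivative f3 x) (at x)"
    and f3_L1: "f3 absolutely_integrable_on {a..b}"
    and q: "q > 1"
    and hconv: "h_convex_on h a b (\<lambda>x. \<bar>f3 x\<bar> powr q)"
  shows "\<bar>integral {a..b} f - (b - a) / 6 * (f a + 4 * f ((a + b) / 2) + f b)\<bar>
    \<le> (b - a) ^ 4 / 6 * (1 / 192) powr (1 - 1 / q) *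
       ((integral {0..1/2} (\<lambda>t. t\<^sup>2 * (1/2 - t) * h t) * \<bar>f3 a\<bar> powr q
          + integral {0..1/2} (\<lambda>t. t\<^sup>2 * (1/2 - t) * h (1 - t)) * \<bar>f3 b\<bar> powr q) powr (1 / q)
      + (integral {0..1/2} (\<lambda>t. t\<^sup>2 * (1/2 - t) * h (1 - t)) * \<bar>f3 a\<bar> powr q
          + integral {0..1/2} (\<lambda>t. t\<^sup>2 * (1/2 - t) * h t) * \<bar>f3 b\<bar> powr q) powr (1 / q))"
proof -
  define g where "g x = \<bar>f3 x\<bar> powr q" for x
  define K1 where "K1 = integral {0..1/2} (\<lambda>t. t\<^sup>2 * (1/2 - t) * h t)"
  define K2 where "K2 = integral {0..1/2} (\<lambda>t. t\<^sup>2 * (1/2 - t) * h (1 - t))"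
  have abI: "{a..b} \<subseteq> I"
    using I_int a_in b_in unfolding is_interval_1 by (meson atLeastAtMost_iff subsetI)
  have halves: "{a..(a + b) / 2} \<subseteq> {a..b}" "{(a + b) / 2..b} \<subseteq> {a..b}"
    using ab by auto
  have K1: "((\<lambda>t. t\<^sup>2 * (1/2 - t) * h t) has_integral K1) {0..1/2}"
    unfolding K1_def by (rule integrable_integral[OF h_moments_integrable(1)[OF h_int]])
  have K2: "((\<lambda>t. t\<^sup>2 * (1/2 - t) * h (1 - t)) has_integral K2) {0..1/2}"
    unfolding K2_def by (rule integrable_integral[OF h_moments_integrable(2)[OF h_int]])
  have convex_bound: "\<bar>f3 x\<bar> powr q \<le> h ((b - x) / (b - a)) * g a + h ((x - a) / (b - a)) * g b"
    if "x \<in> {a..b}" for x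
    using h_convex_endpoint_bound[OF hconv ab that] by (simp add: g_def)
  have left: "\<bar>integral {a..(a + b) / 2} (\<lambda>x. simpson_kernel a b x * f3 x)\<bar>
      \<le> (b - a) ^ 4 / 6 * ((1/192) powr (1 - 1/q) * (K2 * g a + K1 * g b) powr (1/q))"
    using simpson_left_half_bound[OF q ab absolutely_integrable_on_subinterval[OF f3_L1 halves(1)]
        K1 K2] convex_bound halves(1) by blast
  have right: "\<bar>integral {(a + b) / 2..b} (\<lambda>x. simpson_kernel b a x * f3 x)\<bar>
      \<le> (b - a) ^ 4 / 6 * ((1/192) powr (1 - 1/q) * (K1 * g a + K2 * g b) powr (1/q))"
    using simpson_right_half_bound[OF q ab absolutely_integrable_on_subinterval[OF f3_L1 halves(2)]
        K1 K2] convex_bound halves(2) by blast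
  have "\<bar>integral {a..b} f - (b - a) / 6 * (f a + 4 * f ((a + b) / 2) + f b)\<bar>
      \<le> (b - a) ^ 4 / 6 * ((1/192) powr (1 - 1/q) * (K2 * g a + K1 * g b) powr (1/q))
        + (b - a) ^ 4 / 6 * ((1/192) powr (1 - 1/q) * (K1 * g a + K2 * g b) powr (1/q))"
    unfolding simpson_error_representation[OF abI less_imp_le[OF ab] d1 d2 d3]
    by (rule order_trans[OF abs_triangle_ineq add_mono[OF left right]])
  also have "\<dots> = (b - a) ^ 4 / 6 * (1/192) powr (1 - 1/q)
      * ((K1 * g a + K2 * g b) powr (1/q) + (K2 * g a + K1 * g b) powr (1/q))"
    by (simp only: distrib_left mult.assoc add.commute)
  finally show ?thesis unfolding K1_def K2_def g_def .
qed

end
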